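(* Let $\Gamma$, $\varphi$, $\Xi$, $(\cdot)^\flat$ and $\mathscr{M}$ be as in the context. For every base $\mathscr{B}\supseteq\mathscr{M}$ and finite multiset of atoms $S$: (1) if $\sigma\multimap\tau\in\Xi$, then $S\vdash_{\mathscr{B}}(\sigma\multimap\tau)^\flat$ iff $S,\sigma^\flat\vdash_{\mathscr{B}}\tau^\flat$; (2) if $\sigma\otimes\tau\in\Xi$, then $S\vdash_{\mathscr{B}}(\sigma\otimes\tau)^\flat$ iff for every $\mathscr{Y}\supseteq\mathscr{B}$, finite multiset of atoms $V$ and atom $p$, if $V,\sigma^\flat,\tau^\flat\vdash_{\mathscr{Y}}p$ then $S,V\vdash_{\mathscr{Y}}p$; (3) if $\mathrm{I}\in\Xi$, then $S\vdash_{\mathscr{B}}\mathrm{I}^\flat$ iff for every $\mathscr{Y}\supseteq\mathscr{B}$, $V$ and atom $p$, if $V\vdash_{\mathscr{Y}}p$ then $S,V\vdash_{\mathscr{Y}}p$.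
   Context: Fix a countably infinite set $\mathbb{A}$ of atoms. IMLL formulas: $\varphi::= p\in\mathbb{A}\mid\varphi\otimes\varphi\mid \mathrm{I}\mid\varphi\multimap\varphi$; multisets are finite, "$,$" is multiset union. An atomic rule is $(P_1\triangleright p_1,\dots,P_n\triangleright p_n)\Rightarrow p$ ($n\ge0$, $P_i$ finite multisets of atoms, $\triangleright p$ abbreviating $\emptyset\triangleright p$); a base is a set of atomic rules. Derivability $\vdash_{\mathscr{B}}$ is the least relation with (Ref) $[p]\vdash_{\mathscr{B}}p$; (App) if $(P_1\triangleright p_1,\dots,P_n\triangleright p_n)\Rightarrow p\in\mathscr{B}$ and $S_i,P_i\vdash_{\mathscr{B}}p_i$ for all $i$, then $S_1,\dots,S_n\vdash_{\mathscr{B}}p$. Fix a finite multiset $\Gamma$ and formula $\varphi$; let $\Xi$ be the set of all subformulas of formulas in $\Gamma$ and of $\varphi$. Let $(\cdot)^\flat:\Xi\to\mathbb{A}$ be an injection with $p^\flat=p$ for atoms $p\in\Xi$ and such that, for non-atomic $\xi$, $\xi^\flat$ is an atom not occurring in $\Xi$. The base $\mathscr{M}$ consists of the rules: for each $\sigma\multimap\tau\in\Xi$, $(\sigma^\flat\triangleright\tau^\flat)\Rightarrow(\sigma\multimap\tau)^\flat$ and $(\triangleright(\sigma\multimap\tau)^\flat,\triangleright\sigma^\flat)\Rightarrow\tau^\flat$; for each $\sigma\otimes\tau\in\Xi$, $(\triangleright\sigma^\flat,\triangleright\tau^\flat)\Rightarrow(\sigma\otimes\tau)^\flat$ and, for every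 atom $p$, $(\triangleright(\sigma\otimes\tau)^\flat,\ \sigma^\flat,\tau^\flat\triangleright p)\Rightarrow p$; if $\mathrm{I}\in\Xi$, the rule $\Rightarrow\mathrm{I}^\flat$ and, for every atom $p$, $(\triangleright\mathrm{I}^\flat,\triangleright p)\Rightarrow p$. *)

theory Defs
  imports Main "HOL-Library.Multiset"
begin

type_synonym atom = nat

datatype formula =
    Atom atom
  | Tensor formula formula
  | One
  | Lolli formula formula

text \<open>An atomic rule (P1 |> p1, ..., Pn |> pn) => p is represented as the pair
  ([(P1,p1),...,(Pn,pn)], p).  A base is a set of atomic rules.\<close>
type_synonym rule = "((atom multiset \<times> atom) list) \<times> atom"
type_synonym base = "rule set"

inductive derives :: "base \<Rightarrow> atom multiset \<Rightarrow> atom \<Rightarrow> bool" where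
  Ref: "derives B {#p#} p"
| App: "\<lbrakk> (prems, p) \<in> B; length Ss = length prems;
          \<forall>i < length prems. derives B (Ss ! i + fst (prems ! i)) (snd (prems ! i)) \<rbrakk>
       \<Longrightarrow> derives B (sum_list Ss) p"

fun subformulas :: "formula \<Rightarrow> formula set" where
  "subformulas (Atom p) = {Atom p}"
| "subformulas (Tensor a b) = insert (Tensor a b) (subformulas a \<union> subformulas b)"
| "subformulas One = {One}"
| "subformulas (Lolli a b) = insert (Lolli a b) (subformulas a \<union> subformulas b)"

definition Xi :: "formula multiset \<Rightarrow> formula \<Rightarrow> formula set" where
  "Xi \<Gamma> \<phi> = (\<Union>\<gamma> \<in> set_mset \<Gamma>. subformulas \<gamma>) \<union> subformulas \<phi>"

definition is_atomic :: "formula \<Rightarrow> bool" where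
  "is_atomic \<xi> \<longleftrightarrow> (\<exists>p. \<xi> = Atom p)"

definition flat_ok :: "formula multiset \<Rightarrow> formula \<Rightarrow> (formula \<Rightarrow> atom) \<Rightarrow> bool" where
  "flat_ok \<Gamma> \<phi> fl \<longleftrightarrow>
     inj_on fl (Xi \<Gamma> \<phi>)
   \<and> (\<forall>p. Atom p \<in> Xi \<Gamma> \<phi> \<longrightarrow> fl (Atom p) = p)
   \<and> (\<forall>\<xi> \<in> Xi \<Gamma> \<phi>. \<not> is_atomic \<xi> \<longrightarrow> Atom (fl \<xi>) \<notin> Xi \<Gamma> \<phi>)"

definition baseM :: "formula multiset \<Rightarrow> formula \<Rightarrow> (formula \<Rightarrow> atom) \<Rightarrow> base" where
  "baseM \<Gamma> \<phi> fl =
     {r. (\<exists>\<sigma> \<tau>. Lolli \<sigma> \<tau> \<in> Xi \<Gamma> \<phi> \<and>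
            (r = ([({#fl \<sigma>#}, fl \<tau>)], fl (Lolli \<sigma> \<tau>))
           \<or> r = ([({#}, fl (Lolli \<sigma> \<tau>)), ({#}, fl \<sigma>)], fl \<tau>)))
       \<or> (\<exists>\<sigma> \<tau>. Tensor \<sigma> \<tau> \<in> Xi \<Gamma> \<phi> \<and>
            (r = ([({#}, fl \<sigma>), ({#}, fl \<tau>)], fl (Tensor \<sigma> \<tau>))
           \<or> (\<exists>p. r = ([({#}, fl (Tensor \<sigma> \<tau>)), ({#fl \<sigma>, fl \<tau>#}, p)], p))))
       \<or> (One \<in> Xi \<Gamma> \<phi> \<and>
            (r = ([], fl One)
           \<or> (\<exists>p. r = ([({#}, fl One), ({#}, p)], p))))}"

end

theory Submission
  imports Defs
begin

text \<open>Each equivalence only needs the introduction and elimination rules of the connective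
  to be in the base: the introduction rule gives one direction, and the elimination rule,
  applied in an arbitrary extension of the base (derivability is monotone in the base),
  gives the other.  In particular the flattening map need not be injective.\<close>

lemma derives_mono:
  assumes "derives B S p" and "B \<subseteq> Y"
  shows "derives Y S p"
  using assms by (induction rule: derives.induct) (auto intro: derives.intros)

lemma derives_App0: "([], p) \<in> B \<Longrightarrow> derives B {#} p"
  using derives.App[of "[]" p B "[]"] by simp

lemma derives_App1:
  "([(P, q)], p) \<in> B \<Longrightarrow> derives B (S + P) q \<Longrightarrow> derives B S p"
  using derives.App[of "[(P, q)]" p B "[S]"] by simp

lemma derives_App2:
  assumes "([(P1, q1), (P2, q2)], p) \<in> B"
    and "derives B (S1 + P1) q1" and "derives B (S2 + P2) q2"
  shows "derives B (S1 + S2) p"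
  using derives.App[of "[(P1, q1), (P2, q2)]" p B "[S1, S2]"] assms by (auto simp: less_Suc_eq)

lemma derives_lolli_iff:
  assumes intro: "([({#a#}, b)], c) \<in> B"
    and elim: "([({#}, c), ({#}, a)], b) \<in> B"
  shows "derives B S c \<longleftrightarrow> derives B (S + {#a#}) b"
proof
  assume "derives B S c"
  then show "derives B (S + {#a#}) b"
    using derives_App2[OF elim, of S "{#a#}"] derives.Ref by simp
qed (rule derives_App1[OF intro])

lemma derives_tensor_iff:
  assumes intro: "([({#}, a), ({#}, b)], c) \<in> B"
    and elim: "\<And>p. ([({#}, c), ({#a, b#}, p)], p) \<in> B"
  shows "derives B S c \<longleftrightarrow>
    (\<forall>Y V p. B \<subseteq> Y \<longrightarrow> derives Y (V + {#a, b#}) p \<longrightarrow> derives Y (S + V) p)"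
proof (intro iffI allI impI)
  fix Y V p
  assume "derives B S c" and "B \<subseteq> Y" and "derives Y (V + {#a, b#}) p"
  then show "derives Y (S + V) p"
    using derives_App2[of "{#}" c "{#a, b#}" p p Y S V] elim derives_mono by auto
next
  assume elim_admissible:
    "\<forall>Y V p. B \<subseteq> Y \<longrightarrow> derives Y (V + {#a, b#}) p \<longrightarrow> derives Y (S + V) p"
  have "derives B ({#a#} + {#b#}) c"
    using derives_App2[OF intro, of "{#a#}" "{#b#}"] derives.Ref by simp
  then have "derives B ({#} + {#a, b#}) c"
    by (simp add: add_mset_commute)
  with elim_admissible show "derives B S c" by fastforce
qed

lemma derives_one_iff:
  assumes intro: "([], c) \<in> B"
    and elim: "\<And>p. ([({#}, c), ({#}, p)], p) \<in> B"
  shows "derives B S c \<longleftrightarrow>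
    (\<forall>Y V p. B \<subseteq> Y \<longrightarrow> derives Y V p \<longrightarrow> derives Y (S + V) p)"
proof (intro iffI allI impI)
  fix Y V p
  assume "derives B S c" and "B \<subseteq> Y" and "derives Y V p"
  then show "derives Y (S + V) p"
    using derives_App2[of "{#}" c "{#}" p p Y S V] elim derives_mono by auto
next
  assume "\<forall>Y V p. B \<subseteq> Y \<longrightarrow> derives Y V p \<longrightarrow> derives Y (S + V) p"
  with derives_App0[OF intro] show "derives B S c" by fastforce
qed

lemma baseM_Lolli_rules:
  assumes "Lolli \<sigma> \<tau> \<in> Xi \<Gamma> \<phi>"
  shows "([({#fl \<sigma>#}, fl \<tau>)], fl (Lolli \<sigma> \<tau>)) \<in> baseM \<Gamma> \<phi> fl"
    and "([({#}, fl (Lolli \<sigma> \<tau>)), ({#}, fl \<sigma>)], fl \<tau>) \<in> baseM \<Gamma> \<phi> fl"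
  using assms unfolding baseM_def by blast+

lemma baseM_Tensor_rules:
  assumes "Tensor \<sigma> \<tau> \<in> Xi \<Gamma> \<phi>"
  shows "([({#}, fl \<sigma>), ({#}, fl \<tau>)], fl (Tensor \<sigma> \<tau>)) \<in> baseM \<Gamma> \<phi> fl"
    and "([({#}, fl (Tensor \<sigma> \<tau>)), ({#fl \<sigma>, fl \<tau>#}, p)], p) \<in> baseM \<Gamma> \<phi> fl"
  using assms unfolding baseM_def by blast+

lemma baseM_One_rules:
  assumes "One \<in> Xi \<Gamma> \<phi>"
  shows "([], fl One) \<in> baseM \<Gamma> \<phi> fl"
    and "([({#}, fl One), ({#}, p)], p) \<in> baseM \<Gamma> \<phi> fl"
  using assms unfolding baseM_def by blast+

theorem mainTheorem13:
  fixes \<Gamma> :: "formula multiset" and \<phi> :: formula and fl :: "formula \<Rightarrow> atom"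
    and B :: base and S :: "atom multiset"
  assumes "flat_ok \<Gamma> \<phi> fl"
    and "baseM \<Gamma> \<phi> fl \<subseteq> B"
  shows "(\<forall>\<sigma> \<tau>. Lolli \<sigma> \<tau> \<in> Xi \<Gamma> \<phi> \<longrightarrow>
            (derives B S (fl (Lolli \<sigma> \<tau>)) \<longleftrightarrow> derives B (S + {#fl \<sigma>#}) (fl \<tau>)))
       \<and> (\<forall>\<sigma> \<tau>. Tensor \<sigma> \<tau> \<in> Xi \<Gamma> \<phi> \<longrightarrow>
            (derives B S (fl (Tensor \<sigma> \<tau>)) \<longleftrightarrow>
              (\<forall>Y V p. B \<subseteq> Y \<longrightarrow> derives Y (V + {#fl \<sigma>, fl \<tau>#}) p \<longrightarrow> derives Y (S + V) p)))
       \<and> (One \<in> Xi \<Gamma> \<phi> \<longrightarrow>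
            (derives B S (fl One) \<longleftrightarrow>
              (\<forall>Y V p. B \<subseteq> Y \<longrightarrow> derives Y V p \<longrightarrow> derives Y (S + V) p)))"
  using assms(2)
  by (intro conjI allI impI derives_lolli_iff derives_tensor_iff derives_one_iff;
      blast intro: baseM_Lolli_rules baseM_Tensor_rules baseM_One_rules)

end
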